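(* Let $\{(A_n,B_n)\}_{n\in\mathbb{Z}}$ be a stationary and ergodic sequence of pairs of real-valued random variables on a probability space $(\Omega,\mathcal{F},P)$. Suppose that $$\mathbb{E}[\log|A_n|]<0 \quad\text{and}\quad \mathbb{E}[\log^{+}|B_n|]<\infty,$$ where $\log^{+}x=\max\{\log x,0\}$. Then the nonlinear stochastic recurrence equation $$X_{n+1}=A_{n+1}\,|X_n|+B_{n+1},\qquad n\in\mathbb{Z},$$ has a unique stationary solution $\{X_n\}_{n\in\mathbb{Z}}$.
   Context: A stationary solution of the recurrence is a sequence of real random variables $\{X_n\}_{n\in\mathbb{Z}}$, defined on the same probability space, satisfying the recurrence almost surely for every $n\in\mathbb{Z}$, whose finite-dimensional distributions are invariant under time shifts. Uniqueness is understood almost surely: any two stationary solutions coincide for all $n$ almost surely. This recurrence arises from the $p$-order cloud model, in which the $A_n$ are standard normal random variables. *)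

theory Defs
  imports "HOL-Probability.Probability"
begin

text \<open>Positive part of log |x| (with value 0 at x = 0) and negative part of log |x|
  (with value infinity at x = 0, since log 0 = -infinity).\<close>
definition log_plus_abs :: "real \<Rightarrow> ennreal" where
  "log_plus_abs x = (if x = 0 then 0 else ennreal (max 0 (ln \<bar>x\<bar>)))"

definition log_minus_abs :: "real \<Rightarrow> ennreal" where
  "log_minus_abs x = (if x = 0 then \<infinity> else ennreal (max 0 (- ln \<bar>x\<bar>)))"

definition stationary_process ::
  "'a measure \<Rightarrow> (int \<Rightarrow> 'a \<Rightarrow> 'b::topological_space) \<Rightarrow> bool" where
  "stationary_process M Z \<longleftrightarrow>
     (\<forall>n. Z n \<in> borel_measurable M) \<and>
     (\<forall>J k. finite J \<longrightarrow>
        distr M (PiM J (\<lambda>_. borel)) (\<lambda>\<omega>. \<lambda>j\<in>J. Z (j + k) \<omega>) =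
        distr M (PiM J (\<lambda>_. borel)) (\<lambda>\<omega>. \<lambda>j\<in>J. Z j \<omega>))"

definition ergodic_process ::
  "'a measure \<Rightarrow> (int \<Rightarrow> 'a \<Rightarrow> 'b::topological_space) \<Rightarrow> bool" where
  "ergodic_process M Z \<longleftrightarrow>
     (\<forall>S \<in> sets (PiM (UNIV :: int set) (\<lambda>_. (borel :: 'b measure))).
        (\<forall>x. x \<in> S \<longleftrightarrow> (\<lambda>n. x (n + 1)) \<in> S) \<longrightarrow>
        measure M {\<omega> \<in> space M. (\<lambda>n. Z n \<omega>) \<in> S} \<in> {0, 1})"

definition stationary_solution ::
  "'a measure \<Rightarrow> (int \<Rightarrow> 'a \<Rightarrow> real) \<Rightarrow> (int \<Rightarrow> 'a \<Rightarrow> real) \<Rightarrow> (int \<Rightarrow> 'a \<Rightarrow> real) \<Rightarrow> bool" where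
  "stationary_solution M A B X \<longleftrightarrow>
     stationary_process M X \<and>
     (\<forall>n. AE \<omega> in M. X (n + 1) \<omega> = A (n + 1) \<omega> * \<bar>X n \<omega>\<bar> + B (n + 1) \<omega>)"

end

(* Iterating the recurrence backwards from 0 at time n - m gives approximations X_n^(m) with
   |X_n^(m+1) - X_n^(m)| <= |A_n ... A_(n-m+1)| |B_(n-m)|.  The Birkhoff sums along the past of
   a truncated log |A| with negative mean are bounded above (Hopf's maximal ergodic inequality
   plus ergodicity), so the product decays exponentially, while log+ |B_(n-m)| grows sublinearly.
   Hence the X_n^(m) converge almost surely, and the limit, a shift-equivariant functional of the
   driving sequence, is a stationary solution.  Since x |-> a |x| + b is |a|-Lipschitz, two
   solutions satisfy |Y_n - W_n| <= |A_n ... A_(n-k+1)| |Y_(n-k) - W_(n-k)|; the product tends to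
   0 almost surely while the last factor is bounded in probability by stationarity, so
   Y_n = W_n almost surely. *)

theory Submission
  imports Defs
begin

section \<open>Birkhoff sums of a measure preserving map\<close>

locale mpt = prob_space M for M :: "'b measure" +
  fixes T :: "'b \<Rightarrow> 'b"
  assumes T_measurable[measurable]: "T \<in> M \<rightarrow>\<^sub>M M"
    and distr_T: "distr M M T = M"
begin

lemma integrable_comp_T:
  fixes g :: "'b \<Rightarrow> real"
  assumes "integrable M g"
  shows "integrable M (\<lambda>x. g (T x))"
proof -
  have [measurable]: "g \<in> borel_measurable M"
    using assms by auto
  have "integrable (distr M M T) g"
    using assms by (simp add: distr_T)
  then show ?thesis
    by (subst (asm) integrable_distr_eq) auto
qed

lemma integral_comp_T:
  fixes g :: "'b \<Rightarrow> real"
  assumes [measurable]: "g \<in> borel_measurable M"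
  shows "(\<integral>x. g (T x) \<partial>M) = (\<integral>x. g x \<partial>M)"
proof -
  have "(\<integral>x. g (T x) \<partial>M) = (\<integral>x. g x \<partial>distr M M T)"
    by (subst integral_distr) auto
  then show ?thesis
    by (simp add: distr_T)
qed

definition birkhoff_sum :: "('b \<Rightarrow> real) \<Rightarrow> nat \<Rightarrow> 'b \<Rightarrow> real" where
  "birkhoff_sum g k x = (\<Sum>j<k. g ((T ^^ j) x))"

lemma birkhoff_sum_0 [simp]: "birkhoff_sum g 0 x = 0"
  by (simp add: birkhoff_sum_def)

lemma birkhoff_sum_Suc: "birkhoff_sum g (Suc k) x = g x + birkhoff_sum g k (T x)"
  unfolding birkhoff_sum_def sum.lessThan_Suc_shift by (simp del: funpow.simps add: funpow_Suc_right)

fun max_birkhoff_sum :: "('b \<Rightarrow> real) \<Rightarrow> nat \<Rightarrow> 'b \<Rightarrow> real" where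
  "max_birkhoff_sum g 0 x = 0"
| "max_birkhoff_sum g (Suc n) x = max (max_birkhoff_sum g n x) (birkhoff_sum g (Suc n) x)"

lemma max_birkhoff_sum_nonneg: "0 \<le> max_birkhoff_sum g n x"
  by (induction n) auto

lemma birkhoff_sum_le_max: "k \<le> n \<Longrightarrow> birkhoff_sum g k x \<le> max_birkhoff_sum g n x"
  by (induction n) (auto simp: le_Suc_eq)

lemma max_birkhoff_sum_pos_attained:
  "0 < max_birkhoff_sum g n x \<Longrightarrow> \<exists>k. 0 < k \<and> k \<le> n \<and> max_birkhoff_sum g n x = birkhoff_sum g k x"
  by (induction n) (auto simp: max_def le_Suc_eq split: if_splits)

lemma max_birkhoff_sum_step:
  assumes "0 < max_birkhoff_sum g n x"
  shows "max_birkhoff_sum g n x \<le> g x + max_birkhoff_sum g n (T x)"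
proof -
  obtain k where k: "Suc k \<le> n" "max_birkhoff_sum g n x = birkhoff_sum g (Suc k) x"
    using max_birkhoff_sum_pos_attained[OF assms] by (metis Suc_pred)
  have "birkhoff_sum g k (T x) \<le> max_birkhoff_sum g n (T x)"
    using k by (intro birkhoff_sum_le_max) auto
  then show ?thesis
    using k by (simp add: birkhoff_sum_Suc)
qed

context
  fixes g :: "'b \<Rightarrow> real"
  assumes g: "integrable M g"
begin

declare borel_measurable_integrable[OF g, measurable]

lemma integrable_birkhoff_sum: "integrable M (birkhoff_sum g k)"
proof -
  have "integrable M (\<lambda>x. g ((T ^^ j) x))" for j
    by (induction j) (auto simp del: funpow.simps simp: funpow_Suc_right g intro: integrable_comp_T)
  then show ?thesis
    unfolding birkhoff_sum_def by auto
qed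

lemma integrable_max_birkhoff_sum: "integrable M (max_birkhoff_sum g n)"
  by (induction n) (auto intro: integrable_birkhoff_sum)

lemma measurable_max_birkhoff_sum [measurable]: "max_birkhoff_sum g n \<in> borel_measurable M"
  using integrable_max_birkhoff_sum by auto

text \<open>Hopf's argument: with \<open>S = max_birkhoff_sum g n\<close>, \<open>S - S \<circ> T \<le> g\<close> where \<open>S > 0\<close> and
  \<open>S - S \<circ> T \<le> 0\<close> elsewhere, while \<open>S - S \<circ> T\<close> has integral zero because \<open>T\<close> preserves \<open>M\<close>.\<close>
lemma maximal_ergodic_inequality:
  "0 \<le> (\<integral>x. indicator {x \<in> space M. 0 < max_birkhoff_sum g n x} x * g x \<partial>M)"
proof -
  let ?S = "max_birkhoff_sum g n"
  have "0 = (\<integral>x. ?S x - ?S (T x) \<partial>M)"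
    using integrable_max_birkhoff_sum integrable_comp_T[OF integrable_max_birkhoff_sum]
    by (simp add: integral_comp_T)
  also have "\<dots> \<le> (\<integral>x. indicator {x \<in> space M. 0 < ?S x} x * g x \<partial>M)"
  proof (rule integral_mono)
    show "integrable M (\<lambda>x. ?S x - ?S (T x))"
      using integrable_max_birkhoff_sum integrable_comp_T[OF integrable_max_birkhoff_sum] by auto
    show "integrable M (\<lambda>x. indicator {x \<in> space M. 0 < ?S x} x * g x)"
      using integrable_real_mult_indicator[OF _ g] by (simp add: mult.commute)
    show "?S x - ?S (T x) \<le> indicator {x \<in> space M. 0 < ?S x} x * g x" if "x \<in> space M" for x
      using that max_birkhoff_sum_step[of g n x] max_birkhoff_sum_nonneg[of g n x]
        max_birkhoff_sum_nonneg[of g n "T x"]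
      by (cases "0 < ?S x") auto
  qed
  finally show ?thesis .
qed

lemma integral_nonneg_if_AE_birkhoff_sum_pos:
  assumes "AE x in M. \<exists>k. 0 < birkhoff_sum g k x"
  shows "0 \<le> integral\<^sup>L M g"
proof -
  let ?f = "\<lambda>n x. indicator {x \<in> space M. 0 < max_birkhoff_sum g n x} x * g x"
  have lim: "AE x in M. (\<lambda>n. ?f n x) \<longlonglongrightarrow> g x"
    using assms AE_space
  proof eventually_elim
    case (elim x)
    then obtain k where "0 < birkhoff_sum g k x" by blast
    then have "\<forall>n\<ge>k. ?f n x = g x"
      using birkhoff_sum_le_max[of k _ g x] elim by fastforce
    then show ?case
      by (intro tendsto_eventually) (auto simp: eventually_sequentially)
  qed
  have "(\<lambda>n. \<integral>x. ?f n x \<partial>M) \<longlonglongrightarrow> integral\<^sup>L M g"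
  proof (rule integral_dominated_convergence[where w = "\<lambda>x. \<bar>g x\<bar>"])
    show "AE x in M. norm (?f n x) \<le> \<bar>g x\<bar>" for n
      by (auto split: split_indicator)
  qed (use g lim in auto)
  then show ?thesis
    using maximal_ergodic_inequality by (intro LIMSEQ_le_const) auto
qed

end

lemma birkhoff_sum_bdd_above_comp_T:
  "(\<exists>C. \<forall>k. birkhoff_sum g k (T x) \<le> C) \<longleftrightarrow> (\<exists>C. \<forall>k. birkhoff_sum g k x \<le> C)"
proof
  assume "\<exists>C. \<forall>k. birkhoff_sum g k (T x) \<le> C"
  then obtain C where C: "\<And>k. birkhoff_sum g k (T x) \<le> C" by blast
  have "birkhoff_sum g k x \<le> max 0 (g x + C)" for k
  proof (cases k)
    case (Suc k')
    then show ?thesis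
      using C[of k'] by (simp add: birkhoff_sum_Suc)
  qed simp
  then show "\<exists>C. \<forall>k. birkhoff_sum g k x \<le> C" by blast
next
  assume "\<exists>C. \<forall>k. birkhoff_sum g k x \<le> C"
  then obtain C where C: "\<And>k. birkhoff_sum g k x \<le> C" by blast
  have "birkhoff_sum g k (T x) \<le> C - g x" for k
    using C[of "Suc k"] by (simp add: birkhoff_sum_Suc)
  then show "\<exists>C. \<forall>k. birkhoff_sum g k (T x) \<le> C" by blast
qed

text \<open>The set where the Birkhoff sums are unbounded above is invariant, so by ergodicity it is
  null or conull; it cannot be conull, since then the maximal ergodic inequality would give a
  non-negative mean.\<close>
lemma birkhoff_sum_bounded_above:
  assumes g: "integrable M g" and neg: "integral\<^sup>L M g < 0"
    and ergodic: "\<And>S. S \<in> sets M \<Longrightarrow> (\<forall>x\<in>space M. x \<in> S \<longleftrightarrow> T x \<in> S) \<Longrightarrow> prob S = 0 \<or> prob S = 1"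
  shows "AE x in M. \<exists>C. \<forall>k. birkhoff_sum g k x \<le> C"
proof -
  have [measurable]: "birkhoff_sum g k \<in> borel_measurable M" for k
    using integrable_birkhoff_sum[OF g] by auto
  define E where "E = {x \<in> space M. \<not> (\<exists>c::nat. \<forall>k. birkhoff_sum g k x \<le> real c)}"
  have "(\<exists>c::nat. \<forall>k. birkhoff_sum g k x \<le> real c) \<longleftrightarrow> (\<exists>C. \<forall>k. birkhoff_sum g k x \<le> C)" for x
    by (metis order_trans real_nat_ceiling_ge)
  then have E_eq: "E = {x \<in> space M. \<not> (\<exists>C. \<forall>k. birkhoff_sum g k x \<le> C)}"
    unfolding E_def by simp
  have E_sets: "E \<in> sets M"
    unfolding E_def by measurable
  have "T x \<in> E \<longleftrightarrow> x \<in> E" if "x \<in> space M" for x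
    using that measurable_space[OF T_measurable]
    unfolding E_eq mem_Collect_eq birkhoff_sum_bdd_above_comp_T by blast
  then have "prob E = 0 \<or> prob E = 1"
    using ergodic[OF E_sets] by blast
  moreover have "prob E \<noteq> 1"
  proof
    assume "prob E = 1"
    then have "AE x in M. x \<in> E"
      using AE_in_set_eq_1[OF E_sets] by simp
    then have "AE x in M. \<exists>k. 0 < birkhoff_sum g k x"
      unfolding E_eq by eventually_elim (auto simp: not_le)
    then show False
      using integral_nonneg_if_AE_birkhoff_sum_pos[OF g] neg by simp
  qed
  ultimately have "AE x in M. x \<notin> E"
    using prob_eq_0[OF E_sets] by simp
  then show ?thesis
    using AE_space by eventually_elim (auto simp: E_eq)
qed

end

section \<open>Stationary processes and their path space\<close>

abbreviation path_space :: "(int \<Rightarrow> 'b::topological_space) measure" where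
  "path_space \<equiv> PiM UNIV (\<lambda>_. borel)"

lemma stationary_process_measurable:
  "stationary_process M Z \<Longrightarrow> Z n \<in> borel_measurable M"
  by (simp add: stationary_process_def)

lemma stationary_process_measurable_path:
  fixes Z :: "int \<Rightarrow> 'a \<Rightarrow> 'b::topological_space"
  assumes "stationary_process M Z"
  shows "(\<lambda>\<omega> i. Z (i + k) \<omega>) \<in> M \<rightarrow>\<^sub>M path_space"
    and "(\<lambda>\<omega> i. Z i \<omega>) \<in> M \<rightarrow>\<^sub>M path_space"
  by (rule measurable_PiM_single', auto simp: stationary_process_measurable[OF assms])+

text \<open>Cylinders generate the product \<open>\<sigma>\<close>-algebra, so invariance of the finite-dimensional
  distributions extends to the law of the whole path.\<close>
lemma stationary_process_distr_shift:
  fixes Z :: "int \<Rightarrow> 'a \<Rightarrow> 'b::topological_space"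
  assumes M: "prob_space M" and Z: "stationary_process M Z"
  shows "distr M path_space (\<lambda>\<omega> i. Z (i + k) \<omega>) = distr M path_space (\<lambda>\<omega> i. Z i \<omega>)"
proof -
  note [measurable] = stationary_process_measurable[OF Z]
    stationary_process_measurable_path[OF Z]
  have cylinder:
    "emeasure (distr M path_space (\<lambda>\<omega> i. Z (i + k) \<omega>)) (prod_emb UNIV (\<lambda>_. borel) J (Pi\<^sub>E J X))
      = emeasure (distr M (PiM J (\<lambda>_. borel)) (\<lambda>\<omega>. \<lambda>j\<in>J. Z (j + k) \<omega>)) (Pi\<^sub>E J X)"
    if J: "finite J" and X: "\<And>i. i \<in> J \<Longrightarrow> X i \<in> sets borel" for J X k
  proof -
    have "prod_emb UNIV (\<lambda>_. borel) J (Pi\<^sub>E J X) \<in> sets path_space"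
      using J X by (intro sets_PiM_I) auto
    moreover have "Pi\<^sub>E J X \<in> sets (PiM J (\<lambda>_. borel))"
      using J X by (intro sets_PiM_I_finite) auto
    moreover have "(\<lambda>\<omega>. \<lambda>j\<in>J. Z (j + k) \<omega>) \<in> M \<rightarrow>\<^sub>M PiM J (\<lambda>_. borel)"
      by (intro measurable_restrict) auto
    ultimately show ?thesis
      by (simp add: emeasure_distr)
        (intro arg_cong[where f = "emeasure M"], auto simp: prod_emb_def PiE_def Pi_def extensional_def)
  qed
  show ?thesis
  proof (rule measure_eqI_PiM_infinite)
    show "finite_measure (distr M path_space (\<lambda>\<omega> i. Z (i + k) \<omega>))"
      using prob_space.prob_space_distr[OF M stationary_process_measurable_path(1)[OF Z]]
      by (simp add: prob_space.finite_measure)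
    fix J :: "int set" and X :: "int \<Rightarrow> 'b set"
    assume "finite J" "J \<subseteq> UNIV" "\<And>i. i \<in> J \<Longrightarrow> X i \<in> sets borel"
    then show
      "emeasure (distr M path_space (\<lambda>\<omega> i. Z (i + k) \<omega>)) (prod_emb UNIV (\<lambda>_. borel) J (Pi\<^sub>E J X))
      = emeasure (distr M path_space (\<lambda>\<omega> i. Z i \<omega>)) (prod_emb UNIV (\<lambda>_. borel) J (Pi\<^sub>E J X))"
      using cylinder[of J X k] cylinder[of J X 0] Z by (simp add: stationary_process_def)
  qed auto
qed

lemma stationary_process_distr_eq:
  fixes Z :: "int \<Rightarrow> 'a \<Rightarrow> 'b::topological_space"
  assumes M: "prob_space M" and Z: "stationary_process M Z"
  shows "distr M borel (Z k) = distr M borel (Z 0)"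
proof -
  note [measurable] = stationary_process_measurable[OF Z]
    stationary_process_measurable_path[OF Z]
  have "distr M borel (Z k) = distr (distr M path_space (\<lambda>\<omega> i. Z (i + k) \<omega>)) borel (\<lambda>x. x 0)"
    by (subst distr_distr) (auto simp: comp_def)
  also have "\<dots> = distr (distr M path_space (\<lambda>\<omega> i. Z i \<omega>)) borel (\<lambda>x. x 0)"
    by (simp only: stationary_process_distr_shift[OF M Z])
  also have "\<dots> = distr M borel (Z 0)"
    by (subst distr_distr) (auto simp: comp_def)
  finally show ?thesis .
qed

lemma stationary_process_integral_eq:
  fixes Z :: "int \<Rightarrow> 'a \<Rightarrow> 'b::topological_space" and h :: "'b \<Rightarrow> real"
  assumes M: "prob_space M" and Z: "stationary_process M Z"
    and [measurable]: "h \<in> borel_measurable borel"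
  shows "(\<integral>\<omega>. h (Z k \<omega>) \<partial>M) = (\<integral>\<omega>. h (Z 0 \<omega>) \<partial>M)"
proof -
  note [measurable] = stationary_process_measurable[OF Z]
  have "(\<integral>\<omega>. h (Z k \<omega>) \<partial>M) = (\<integral>x. h x \<partial>distr M borel (Z k))"
    by (subst integral_distr) auto
  also have "\<dots> = (\<integral>\<omega>. h (Z 0 \<omega>) \<partial>M)"
    by (subst stationary_process_distr_eq[OF M Z]) (subst integral_distr, auto)
  finally show ?thesis .
qed

lemma stationary_process_path_functional:
  fixes Z :: "int \<Rightarrow> 'a \<Rightarrow> 'b::topological_space" and \<Phi> :: "int \<Rightarrow> (int \<Rightarrow> 'b) \<Rightarrow> real"
  assumes M: "prob_space M" and Z: "stationary_process M Z"
    and [measurable]: "\<And>j. \<Phi> j \<in> borel_measurable path_space"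
    and shift: "\<And>j k x. \<Phi> j (\<lambda>i. x (i + k)) = \<Phi> (j + k) x"
  shows "stationary_process M (\<lambda>j \<omega>. \<Phi> j (\<lambda>i. Z i \<omega>))"
  unfolding stationary_process_def
proof (intro conjI allI impI)
  note [measurable] = stationary_process_measurable[OF Z]
    stationary_process_measurable_path[OF Z]
  show "(\<lambda>\<omega>. \<Phi> j (\<lambda>i. Z i \<omega>)) \<in> borel_measurable M" for j
    by measurable
  fix J :: "int set" and k :: int
  define \<Psi> where "\<Psi> x = (\<lambda>j\<in>J. \<Phi> j x)" for x
  have [measurable]: "\<Psi> \<in> path_space \<rightarrow>\<^sub>M PiM J (\<lambda>_. borel)"
    unfolding \<Psi>_def by measurable
  have "\<Phi> j (\<lambda>i. Z (i + k) \<omega>) = \<Phi> (j + k) (\<lambda>i. Z i \<omega>)" for j \<omega>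
    using shift[of j "\<lambda>i. Z i \<omega>" k] by simp
  then have "distr M (PiM J (\<lambda>_. borel)) (\<lambda>\<omega>. \<lambda>j\<in>J. \<Phi> (j + k) (\<lambda>i. Z i \<omega>))
      = distr (distr M path_space (\<lambda>\<omega> i. Z (i + k) \<omega>)) (PiM J (\<lambda>_. borel)) \<Psi>"
    by (subst distr_distr) (auto simp: comp_def \<Psi>_def)
  also have "\<dots> = distr (distr M path_space (\<lambda>\<omega> i. Z i \<omega>)) (PiM J (\<lambda>_. borel)) \<Psi>"
    by (simp only: stationary_process_distr_shift[OF M Z])
  also have "\<dots> = distr M (PiM J (\<lambda>_. borel)) (\<lambda>\<omega>. \<lambda>j\<in>J. \<Phi> j (\<lambda>i. Z i \<omega>))"
    by (subst distr_distr) (auto simp: comp_def \<Psi>_def)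
  finally show "distr M (PiM J (\<lambda>_. borel)) (\<lambda>\<omega>. \<lambda>j\<in>J. \<Phi> (j + k) (\<lambda>i. Z i \<omega>))
      = distr M (PiM J (\<lambda>_. borel)) (\<lambda>\<omega>. \<lambda>j\<in>J. \<Phi> j (\<lambda>i. Z i \<omega>))" .
qed

definition backshift :: "(int \<Rightarrow> 'b) \<Rightarrow> int \<Rightarrow> 'b" where
  "backshift x = (\<lambda>i. x (i - 1))"

lemma funpow_backshift: "(backshift ^^ j) x = (\<lambda>i. x (i - int j))"
  by (induction j arbitrary: x) (auto simp: backshift_def algebra_simps)

lemma measurable_backshift [measurable]:
  "backshift \<in> (path_space :: (int \<Rightarrow> 'b::topological_space) measure) \<rightarrow>\<^sub>M path_space"
  unfolding backshift_def by (rule measurable_PiM_single') (auto simp: space_PiM)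

locale stationary_ergodic_process = prob_space M for M :: "'a measure" +
  fixes Z :: "int \<Rightarrow> 'a \<Rightarrow> 'b::topological_space"
  assumes stationary: "stationary_process M Z" and ergodic: "ergodic_process M Z"
begin

lemmas measurable_Z [measurable] = stationary_process_measurable[OF stationary]
lemmas measurable_path [measurable] = stationary_process_measurable_path[OF stationary]

definition law :: "(int \<Rightarrow> 'b) measure" where
  "law = distr M path_space (\<lambda>\<omega> i. Z i \<omega>)"

lemma sets_law [measurable_cong]: "sets law = sets path_space"
  by (simp add: law_def)

lemma space_law: "space law = UNIV"
  using sets_eq_imp_space_eq[OF sets_law] by (simp add: space_PiM)

lemma distr_law_backshift: "distr law law backshift = law"
proof -
  have "distr law law backshift = distr law path_space backshift"
    by (rule distr_cong) (auto simp: sets_law)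
  also have "\<dots> = distr M path_space (\<lambda>\<omega> i. Z (i + (- 1)) \<omega>)"
    unfolding law_def by (subst distr_distr) (auto simp: comp_def backshift_def)
  also have "\<dots> = law"
    unfolding law_def by (rule stationary_process_distr_shift[OF prob_space_axioms stationary])
  finally show ?thesis .
qed

lemma prob_space_law: "prob_space law"
  unfolding law_def by (rule prob_space_distr) simp

sublocale law: mpt law backshift
  by (rule mpt.intro[OF prob_space_law], unfold_locales)
    (simp_all add: measurable_cong_sets[OF sets_law sets_law] distr_law_backshift)

lemma law_ergodic:
  assumes S: "S \<in> sets law" and invariant: "\<forall>x\<in>space law. x \<in> S \<longleftrightarrow> backshift x \<in> S"
  shows "law.prob S = 0 \<or> law.prob S = 1"
proof -
  have "x \<in> S \<longleftrightarrow> (\<lambda>n. x (n + 1)) \<in> S" for x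
    using invariant[rule_format, of "\<lambda>n. x (n + 1)"] by (simp add: space_law backshift_def)
  then have "measure M {\<omega> \<in> space M. (\<lambda>n. Z n \<omega>) \<in> S} \<in> {0, 1}"
    using ergodic S unfolding ergodic_process_def sets_law by blast
  moreover have "law.prob S = measure M {\<omega> \<in> space M. (\<lambda>n. Z n \<omega>) \<in> S}"
    using S unfolding law_def sets_law
    by (subst measure_distr) (auto simp: vimage_def Int_def conj_commute)
  ultimately show ?thesis
    by auto
qed

lemma sums_over_past_bounded_above:
  fixes g :: "(int \<Rightarrow> 'b) \<Rightarrow> real"
  assumes [measurable]: "g \<in> borel_measurable path_space"
    and integrable: "integrable M (\<lambda>\<omega>. g (\<lambda>i. Z i \<omega>))"
    and negative: "(\<integral>\<omega>. g (\<lambda>i. Z i \<omega>) \<partial>M) < 0"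
  shows "AE \<omega> in M. \<exists>C. \<forall>m. (\<Sum>j<m. g (\<lambda>i. Z (i - int j) \<omega>)) \<le> C"
proof -
  have "integrable law g"
    using integrable unfolding law_def by (subst integrable_distr_eq) auto
  moreover have "integral\<^sup>L law g < 0"
    using negative unfolding law_def by (subst integral_distr) auto
  ultimately have "AE x in law. \<exists>C. \<forall>m. law.birkhoff_sum g m x \<le> C"
    by (intro law.birkhoff_sum_bounded_above law_ergodic)
  then show ?thesis
    unfolding law_def law.birkhoff_sum_def funpow_backshift
    by (rule AE_distrD[OF measurable_path(2)])
qed

end

section \<open>Logarithmic moments and growth along the past\<close>

definition log_plus :: "real \<Rightarrow> real" where
  "log_plus x = max 0 (ln \<bar>x\<bar>)"

definition log_minus_trunc :: "real \<Rightarrow> real \<Rightarrow> real" where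
  "log_minus_trunc K x = (if x = 0 then K else min K (max 0 (- ln \<bar>x\<bar>)))"

lemma measurable_log_plus [measurable]: "log_plus \<in> borel_measurable borel"
  unfolding log_plus_def by measurable

lemma measurable_log_minus_trunc [measurable]: "log_minus_trunc K \<in> borel_measurable borel"
  unfolding log_minus_trunc_def by measurable

lemma log_plus_nonneg: "0 \<le> log_plus x"
  by (simp add: log_plus_def)

lemma log_plus_abs_eq: "log_plus_abs x = ennreal (log_plus x)"
  by (simp add: log_plus_abs_def log_plus_def)

lemma log_minus_abs_eq_SUP: "log_minus_abs x = (SUP K::nat. ennreal (log_minus_trunc K x))"
proof (cases "x = 0")
  case True
  then show ?thesis
    by (simp add: log_minus_abs_def log_minus_trunc_def ennreal_of_nat_eq_real_of_nat[symmetric]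
        ennreal_SUP_of_nat_eq_top)
next
  case False
  define v where "v = max 0 (- ln \<bar>x\<bar>)"
  have "(SUP K::nat. ennreal (min (real K) v)) = ennreal v"
  proof (rule antisym)
    show "(SUP K::nat. ennreal (min (real K) v)) \<le> ennreal v"
      by (rule SUP_least) (simp add: ennreal_leI)
    have "min (real (nat \<lceil>v\<rceil>)) v = v"
      by linarith
    then show "ennreal v \<le> (SUP K::nat. ennreal (min (real K) v))"
      by (intro SUP_upper2[of "nat \<lceil>v\<rceil>"]) auto
  qed
  then show ?thesis
    using False by (simp add: log_minus_abs_def log_minus_trunc_def v_def)
qed

lemma abs_le_exp_log_plus: "\<bar>x\<bar> \<le> exp (log_plus x)"
proof (cases "x = 0")
  case False
  then have "\<bar>x\<bar> = exp (ln \<bar>x\<bar>)"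
    by simp
  then show ?thesis
    by (metis exp_le_cancel_iff log_plus_def max.cobounded2)
qed simp

lemma abs_le_exp_log_plus_minus_trunc:
  assumes "0 \<le> K"
  shows "\<bar>x\<bar> \<le> exp (log_plus x - log_minus_trunc K x)"
proof (cases "x = 0")
  case False
  then have "ln \<bar>x\<bar> \<le> log_plus x - log_minus_trunc K x"
    using assms by (auto simp: log_plus_def log_minus_trunc_def)
  then show ?thesis
    using False by (metis exp_le_cancel_iff exp_ln zero_less_abs_iff)
qed simp

context prob_space
begin

lemma integrable_log_plus:
  assumes [measurable]: "f \<in> borel_measurable M" and finite: "(\<integral>\<^sup>+\<omega>. log_plus_abs (f \<omega>) \<partial>M) < \<infinity>"
  shows "integrable M (\<lambda>\<omega>. log_plus (f \<omega>))"
  using finite by (intro integrableI_nonneg) (auto simp: log_plus_nonneg log_plus_abs_eq)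

lemma integrable_log_minus_trunc:
  assumes [measurable]: "f \<in> borel_measurable M"
  shows "integrable M (\<lambda>\<omega>. log_minus_trunc K (f \<omega>))"
  by (rule integrable_const_bound[where B = "\<bar>K\<bar>"]) (auto simp: log_minus_trunc_def)

text \<open>The hypothesis compares two possibly infinite integrals; by monotone convergence it survives
  truncation of the negative part at a finite level, after which both sides are finite.\<close>
lemma log_moment_gap_truncated:
  assumes [measurable]: "f \<in> borel_measurable M"
    and gap: "(\<integral>\<^sup>+\<omega>. log_plus_abs (f \<omega>) \<partial>M) < (\<integral>\<^sup>+\<omega>. log_minus_abs (f \<omega>) \<partial>M)"
  shows "\<exists>K::nat. (\<integral>\<omega>. log_plus (f \<omega>) \<partial>M) < (\<integral>\<omega>. log_minus_trunc K (f \<omega>) \<partial>M)"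
proof -
  have "(\<integral>\<^sup>+\<omega>. log_plus (f \<omega>) \<partial>M) < (\<integral>\<^sup>+\<omega>. (SUP K::nat. ennreal (log_minus_trunc K (f \<omega>))) \<partial>M)"
    using gap by (simp add: log_plus_abs_eq log_minus_abs_eq_SUP)
  also have "\<dots> = (SUP K::nat. \<integral>\<^sup>+\<omega>. log_minus_trunc K (f \<omega>) \<partial>M)"
    by (rule nn_integral_monotone_convergence_SUP)
      (auto simp: incseq_def le_fun_def log_minus_trunc_def intro!: ennreal_leI)
  finally obtain K :: nat
    where K: "(\<integral>\<^sup>+\<omega>. log_plus (f \<omega>) \<partial>M) < (\<integral>\<^sup>+\<omega>. log_minus_trunc K (f \<omega>) \<partial>M)"
    by (auto simp: less_SUP_iff)
  have "(\<integral>\<omega>. log_plus (f \<omega>) \<partial>M) = enn2real (\<integral>\<^sup>+\<omega>. log_plus (f \<omega>) \<partial>M)"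
    by (rule integral_eq_nn_integral) (auto simp: log_plus_nonneg)
  moreover have "(\<integral>\<omega>. log_minus_trunc K (f \<omega>) \<partial>M) = enn2real (\<integral>\<^sup>+\<omega>. log_minus_trunc K (f \<omega>) \<partial>M)"
    by (rule integral_eq_nn_integral) (auto simp: log_minus_trunc_def)
  moreover have "(\<integral>\<^sup>+\<omega>. log_minus_trunc K (f \<omega>) \<partial>M) < \<infinity>"
    using integrable_log_minus_trunc[of f K]
    by (auto simp: integrable_iff_bounded log_minus_trunc_def)
  ultimately have "(\<integral>\<omega>. log_plus (f \<omega>) \<partial>M) < (\<integral>\<omega>. log_minus_trunc K (f \<omega>) \<partial>M)"
    using K by (simp add: ennreal_enn2real_if)
  then show ?thesis ..
qed

end

context stationary_ergodic_process
begin

text \<open>\<open>ln \<bar>f\<bar> \<le> u\<close> for \<open>u = log_plus \<circ> f - log_minus_trunc K \<circ> f\<close>, whose mean is some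
  \<open>-2\<epsilon> < 0\<close> once \<open>K\<close> is large; so the Birkhoff sums of \<open>u + \<epsilon>\<close> along the past are bounded above.\<close>
lemma prod_abs_past_exponential_decay:
  fixes f :: "'b \<Rightarrow> real"
  assumes [measurable]: "f \<in> borel_measurable borel"
    and gap: "(\<integral>\<^sup>+\<omega>. log_plus_abs (f (Z n \<omega>)) \<partial>M) < (\<integral>\<^sup>+\<omega>. log_minus_abs (f (Z n \<omega>)) \<partial>M)"
  shows "\<exists>\<epsilon>>0. AE \<omega> in M. \<exists>C. \<forall>m. (\<Prod>j<m. \<bar>f (Z (n - int j) \<omega>)\<bar>) \<le> exp (C - \<epsilon> * real m)"
proof -
  obtain K :: nat
    where K: "(\<integral>\<omega>. log_plus (f (Z n \<omega>)) \<partial>M) < (\<integral>\<omega>. log_minus_trunc K (f (Z n \<omega>)) \<partial>M)"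
    using log_moment_gap_truncated[OF _ gap] by auto
  define u where "u y = log_plus y - log_minus_trunc K y" for y
  define \<epsilon> where "\<epsilon> = - (\<integral>\<omega>. u (f (Z n \<omega>)) \<partial>M) / 2"
  have integrable_plus: "integrable M (\<lambda>\<omega>. log_plus (f (Z n \<omega>)))"
    using less_le_trans[OF gap top_greatest] by (intro integrable_log_plus) auto
  have integrable_minus: "integrable M (\<lambda>\<omega>. log_minus_trunc K (f (Z n \<omega>)))"
    by (intro integrable_log_minus_trunc) auto
  have integrable_u: "integrable M (\<lambda>\<omega>. u (f (Z n \<omega>)))"
    unfolding u_def using integrable_plus integrable_minus by auto
  have \<epsilon>: "0 < \<epsilon>"
    using K integrable_plus integrable_minus unfolding \<epsilon>_def u_def by simp
  have "AE \<omega> in M. \<exists>C. \<forall>m. (\<Sum>j<m. u (f (Z (n - int j) \<omega>)) + \<epsilon>) \<le> C"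
    using sums_over_past_bounded_above[where g = "\<lambda>x. u (f (x n)) + \<epsilon>"] integrable_u \<epsilon>
    unfolding \<epsilon>_def u_def by (simp add: prob_space)
  then have "AE \<omega> in M. \<exists>C. \<forall>m. (\<Prod>j<m. \<bar>f (Z (n - int j) \<omega>)\<bar>) \<le> exp (C - \<epsilon> * real m)"
  proof eventually_elim
    case (elim \<omega>)
    then obtain C where C: "\<And>m. (\<Sum>j<m. u (f (Z (n - int j) \<omega>)) + \<epsilon>) \<le> C"
      by blast
    have "(\<Prod>j<m. \<bar>f (Z (n - int j) \<omega>)\<bar>) \<le> exp (C - \<epsilon> * real m)" for m
    proof -
      have "(\<Prod>j<m. \<bar>f (Z (n - int j) \<omega>)\<bar>) \<le> (\<Prod>j<m. exp (u (f (Z (n - int j) \<omega>))))"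
        by (intro prod_mono) (auto simp: u_def abs_le_exp_log_plus_minus_trunc)
      also have "\<dots> = exp (\<Sum>j<m. u (f (Z (n - int j) \<omega>)))"
        by (simp add: exp_sum)
      also have "\<dots> \<le> exp (C - \<epsilon> * real m)"
        using C[of m] by (simp add: sum.distrib mult.commute)
      finally show ?thesis .
    qed
    then show ?case
      by blast
  qed
  with \<epsilon> show ?thesis
    by blast
qed

text \<open>The Birkhoff sums of the coboundary \<open>log_plus (f (Z (n - 1))) - log_plus (f (Z n))\<close>
  telescope, and subtracting \<open>\<epsilon>\<close> makes its mean negative.\<close>
lemma abs_past_subexponential_growth:
  fixes f :: "'b \<Rightarrow> real"
  assumes [measurable]: "f \<in> borel_measurable borel"
    and finite: "\<And>n. (\<integral>\<^sup>+\<omega>. log_plus_abs (f (Z n \<omega>)) \<partial>M) < \<infinity>"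
    and \<epsilon>: "0 < \<epsilon>"
  shows "AE \<omega> in M. \<exists>C. \<forall>m. \<bar>f (Z (n - int m) \<omega>)\<bar> \<le> exp (C + \<epsilon> * real m)"
proof -
  let ?l = "\<lambda>k \<omega>. log_plus (f (Z k \<omega>))"
  have integrable_l: "integrable M (?l k)" for k
    using finite by (intro integrable_log_plus) auto
  have "(\<integral>\<omega>. ?l k \<omega> \<partial>M) = (\<integral>\<omega>. ?l 0 \<omega> \<partial>M)" for k
    by (rule stationary_process_integral_eq[OF prob_space_axioms stationary, where h = "log_plus \<circ> f",
          unfolded comp_def]) measurable
  then have "(\<integral>\<omega>. ?l (n - 1) \<omega> \<partial>M) = (\<integral>\<omega>. ?l n \<omega> \<partial>M)"
    by metis
  then have "AE \<omega> in M. \<exists>C. \<forall>m. (\<Sum>j<m. ?l (n - int j - 1) \<omega> - ?l (n - int j) \<omega> - \<epsilon>) \<le> C"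
    using sums_over_past_bounded_above[where g = "\<lambda>x. log_plus (f (x (n - 1))) - log_plus (f (x n)) - \<epsilon>"]
      integrable_l \<epsilon> by (simp add: prob_space algebra_simps)
  then show ?thesis
  proof eventually_elim
    case (elim \<omega>)
    then obtain C where C: "\<And>m. (\<Sum>j<m. ?l (n - int j - 1) \<omega> - ?l (n - int j) \<omega> - \<epsilon>) \<le> C"
      by blast
    have "\<bar>f (Z (n - int m) \<omega>)\<bar> \<le> exp (C + ?l n \<omega> + \<epsilon> * real m)" for m
    proof -
      have "(\<Sum>j<m. ?l (n - int j - 1) \<omega> - ?l (n - int j) \<omega> - \<epsilon>)
          = (\<Sum>j<m. ?l (n - int (Suc j)) \<omega> - ?l (n - int j) \<omega>) - \<epsilon> * m"
        by (simp add: sum_subtractf sum.distrib algebra_simps)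
      also have "\<dots> = ?l (n - int m) \<omega> - ?l n \<omega> - \<epsilon> * m"
        by (subst sum_lessThan_telescope) simp
      finally have "(\<Sum>j<m. ?l (n - int j - 1) \<omega> - ?l (n - int j) \<omega> - \<epsilon>)
          = ?l (n - int m) \<omega> - ?l n \<omega> - \<epsilon> * m" .
      then have "?l (n - int m) \<omega> \<le> C + ?l n \<omega> + \<epsilon> * real m"
        using C[of m] by simp
      then show ?thesis
        using abs_le_exp_log_plus order_trans by fastforce
    qed
    then show ?case
      by blast
  qed
qed

end

section \<open>Backward iteration of the recurrence\<close>

lemma abs_recurrence_diff_le:
  fixes a b y w :: real
  shows "\<bar>(a * \<bar>y\<bar> + b) - (a * \<bar>w\<bar> + b)\<bar> \<le> \<bar>a\<bar> * \<bar>y - w\<bar>"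
proof -
  have "(a * \<bar>y\<bar> + b) - (a * \<bar>w\<bar> + b) = a * (\<bar>y\<bar> - \<bar>w\<bar>)"
    by (simp add: algebra_simps)
  then have "\<bar>(a * \<bar>y\<bar> + b) - (a * \<bar>w\<bar> + b)\<bar> = \<bar>a\<bar> * \<bar>\<bar>y\<bar> - \<bar>w\<bar>\<bar>"
    by (simp add: abs_mult)
  also have "\<dots> \<le> \<bar>a\<bar> * \<bar>y - w\<bar>"
    by (intro mult_left_mono) auto
  finally show ?thesis .
qed

lemma recurrence_solutions_diff_le:
  fixes y w a b :: "int \<Rightarrow> real"
  assumes y: "\<And>i. y (i + 1) = a (i + 1) * \<bar>y i\<bar> + b (i + 1)"
    and w: "\<And>i. w (i + 1) = a (i + 1) * \<bar>w i\<bar> + b (i + 1)"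
  shows "\<bar>y n - w n\<bar> \<le> (\<Prod>j<k. \<bar>a (n - int j)\<bar>) * \<bar>y (n - int k) - w (n - int k)\<bar>"
proof (induction k arbitrary: n)
  case (Suc k)
  have "\<bar>y n - w n\<bar> \<le> \<bar>a n\<bar> * \<bar>y (n - 1) - w (n - 1)\<bar>"
    using y[of "n - 1"] w[of "n - 1"] abs_recurrence_diff_le[of "a n" "y (n - 1)" "b n" "w (n - 1)"]
    by simp
  also have "\<dots> \<le> \<bar>a n\<bar> * ((\<Prod>j<k. \<bar>a (n - 1 - int j)\<bar>) * \<bar>y (n - 1 - int k) - w (n - 1 - int k)\<bar>)"
    by (intro mult_left_mono Suc.IH) auto
  also have "\<dots> = (\<Prod>j<Suc k. \<bar>a (n - int j)\<bar>) * \<bar>y (n - int (Suc k)) - w (n - int (Suc k))\<bar>"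
    by (simp only: prod.lessThan_Suc_shift) (simp add: algebra_simps)
  finally show ?case .
qed simp

lemma borel_measurable_fst [measurable]:
  "fst \<in> borel_measurable (borel :: ('a::topological_space \<times> 'b::topological_space) measure)"
  by (intro borel_measurable_continuous_onI continuous_intros)

lemma borel_measurable_snd [measurable]:
  "snd \<in> borel_measurable (borel :: ('a::topological_space \<times> 'b::topological_space) measure)"
  by (intro borel_measurable_continuous_onI continuous_intros)

text \<open>\<open>backward_iterate m x n\<close> is the value at time \<open>n\<close> of the solution driven by the path
  \<open>x i = (A i, B i)\<close> and started from \<open>0\<close> at time \<open>n - m\<close>.\<close>
fun backward_iterate :: "nat \<Rightarrow> (int \<Rightarrow> real \<times> real) \<Rightarrow> int \<Rightarrow> real" where
  "backward_iterate 0 x n = 0"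
| "backward_iterate (Suc m) x n = fst (x n) * \<bar>backward_iterate m x (n - 1)\<bar> + snd (x n)"

definition backward_limit :: "int \<Rightarrow> (int \<Rightarrow> real \<times> real) \<Rightarrow> real" where
  "backward_limit n x = lim (\<lambda>m. backward_iterate m x n)"

lemma measurable_backward_iterate [measurable]:
  "(\<lambda>x. backward_iterate m x n) \<in> borel_measurable path_space"
proof (induction m arbitrary: n)
  case (Suc m)
  note [measurable] = Suc.IH
  show ?case
    by simp
qed simp

lemma measurable_backward_limit [measurable]: "backward_limit n \<in> borel_measurable path_space"
  unfolding backward_limit_def by measurable

lemma backward_iterate_shift: "backward_iterate m (\<lambda>i. x (i + k)) n = backward_iterate m x (n + k)"
  by (induction m arbitrary: n) (simp_all add: algebra_simps)

lemma backward_limit_shift: "backward_limit n (\<lambda>i. x (i + k)) = backward_limit (n + k) x"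
  by (simp add: backward_limit_def backward_iterate_shift)

lemma backward_iterate_Suc_diff_le:
  "\<bar>backward_iterate (Suc m) x n - backward_iterate m x n\<bar>
    \<le> (\<Prod>j<m. \<bar>fst (x (n - int j))\<bar>) * \<bar>snd (x (n - int m))\<bar>"
proof (induction m arbitrary: n)
  case (Suc m)
  have "\<bar>backward_iterate (Suc (Suc m)) x n - backward_iterate (Suc m) x n\<bar>
      \<le> \<bar>fst (x n)\<bar> * \<bar>backward_iterate (Suc m) x (n - 1) - backward_iterate m x (n - 1)\<bar>"
    by (simp only: backward_iterate.simps(2) abs_recurrence_diff_le)
  also have "\<dots> \<le> \<bar>fst (x n)\<bar> * ((\<Prod>j<m. \<bar>fst (x (n - 1 - int j))\<bar>) * \<bar>snd (x (n - 1 - int m))\<bar>)"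
    by (intro mult_left_mono Suc.IH) auto
  also have "\<dots> = (\<Prod>j<Suc m. \<bar>fst (x (n - int j))\<bar>) * \<bar>snd (x (n - int (Suc m)))\<bar>"
    by (simp only: prod.lessThan_Suc_shift) (simp add: algebra_simps)
  finally show ?case .
qed simp

lemma backward_iterate_convergent:
  assumes "summable (\<lambda>m. (\<Prod>j<m. \<bar>fst (x (n - int j))\<bar>) * \<bar>snd (x (n - int m))\<bar>)"
  shows "convergent (\<lambda>m. backward_iterate m x n)"
proof -
  have "summable (\<lambda>m. backward_iterate (Suc m) x n - backward_iterate m x n)"
    by (rule summable_comparison_test'[OF assms]) (unfold real_norm_def, rule backward_iterate_Suc_diff_le)
  then have "convergent (\<lambda>m. \<Sum>i<m. backward_iterate (Suc i) x n - backward_iterate i x n)"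
    by (simp only: summable_iff_convergent)
  then show ?thesis
    by (simp only: sum_lessThan_telescope[of "\<lambda>j. backward_iterate j x n"]
        backward_iterate.simps(1) diff_zero)
qed

lemma backward_limit_recurrence:
  assumes "convergent (\<lambda>m. backward_iterate m x n)"
  shows "backward_limit (n + 1) x = fst (x (n + 1)) * \<bar>backward_limit n x\<bar> + snd (x (n + 1))"
proof -
  have "(\<lambda>m. backward_iterate (Suc m) x (n + 1))
      \<longlonglongrightarrow> fst (x (n + 1)) * \<bar>backward_limit n x\<bar> + snd (x (n + 1))"
    using assms by (auto simp: backward_limit_def convergent_LIMSEQ_iff intro!: tendsto_intros)
  then show ?thesis
    unfolding backward_limit_def by (intro limI) (rule LIMSEQ_imp_Suc)
qed

section \<open>Boundedness in probability\<close>

definition bounded_in_probability :: "'a measure \<Rightarrow> ('i \<Rightarrow> 'a \<Rightarrow> real) \<Rightarrow> bool" where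
  "bounded_in_probability M X \<longleftrightarrow> (\<forall>\<eta>>0. \<exists>N. \<forall>i. measure M {\<omega> \<in> space M. N < \<bar>X i \<omega>\<bar>} < \<eta>)"

lemma bounded_in_probability_reindex:
  assumes "bounded_in_probability M X"
  shows "bounded_in_probability M (\<lambda>k. X (h k))"
  unfolding bounded_in_probability_def
proof (intro allI impI)
  fix \<eta> :: real assume "0 < \<eta>"
  then obtain N where "\<And>i. measure M {\<omega> \<in> space M. N < \<bar>X i \<omega>\<bar>} < \<eta>"
    using assms unfolding bounded_in_probability_def by blast
  then show "\<exists>N. \<forall>k. measure M {\<omega> \<in> space M. N < \<bar>X (h k) \<omega>\<bar>} < \<eta>"
    by blast
qed

context prob_space
begin

lemma measure_abs_gt_tendsto_0:
  fixes X :: "nat \<Rightarrow> 'a \<Rightarrow> real"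
  assumes [measurable]: "\<And>k. X k \<in> borel_measurable M"
    and lim: "AE \<omega> in M. (\<lambda>k. X k \<omega>) \<longlonglongrightarrow> 0" and c: "0 < c"
  shows "(\<lambda>k. measure M {\<omega> \<in> space M. c < \<bar>X k \<omega>\<bar>}) \<longlonglongrightarrow> 0"
proof -
  let ?S = "\<lambda>k. {\<omega> \<in> space M. c < \<bar>X k \<omega>\<bar>}"
  have "(\<lambda>k. \<integral>\<omega>. indicator (?S k) \<omega> \<partial>M) \<longlonglongrightarrow> (\<integral>\<omega>. 0 \<partial>M :: real)"
  proof (rule integral_dominated_convergence[where w = "\<lambda>_. 1"])
    show "AE \<omega> in M. (\<lambda>k. indicator (?S k) \<omega> :: real) \<longlonglongrightarrow> 0"
      using lim
    proof eventually_elim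
      case (elim \<omega>)
      then have "eventually (\<lambda>k. \<bar>X k \<omega>\<bar> < c) sequentially"
        using order_tendstoD(2)[OF tendsto_rabs[OF elim], of c] c by simp
      then show ?case
        by (rule tendsto_eventually[OF eventually_mono]) (auto split: split_indicator)
    qed
  qed (auto split: split_indicator)
  moreover have "(\<integral>\<omega>. indicator (?S k) \<omega> \<partial>M) = measure M (?S k)" for k
    by (auto intro!: arg_cong[where f = "measure M"])
  ultimately show ?thesis
    by simp
qed

lemma measure_abs_gt_nat_tendsto_0:
  assumes [measurable]: "f \<in> borel_measurable M"
  shows "(\<lambda>N::nat. measure M {\<omega> \<in> space M. real N < \<bar>f \<omega>\<bar>}) \<longlonglongrightarrow> 0"
proof -
  have lim: "(\<lambda>N::nat. measure M {\<omega> \<in> space M. 1 < \<bar>f \<omega> / real N\<bar>}) \<longlonglongrightarrow> 0"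
    by (rule measure_abs_gt_tendsto_0) (auto intro: lim_const_over_n)
  have "{\<omega> \<in> space M. 1 < \<bar>f \<omega> / real N\<bar>} = {\<omega> \<in> space M. real N < \<bar>f \<omega>\<bar>}" if "0 < N" for N
    using that by (simp add: abs_divide less_divide_eq)
  then have eq: "eventually (\<lambda>N. measure M {\<omega> \<in> space M. 1 < \<bar>f \<omega> / real N\<bar>}
      = measure M {\<omega> \<in> space M. real N < \<bar>f \<omega>\<bar>}) sequentially"
    by (auto simp: eventually_sequentially intro!: exI[of _ 1])
  show ?thesis
    by (rule iffD1[OF tendsto_cong[OF eq] lim])
qed

lemma stationary_process_bounded_in_probability:
  fixes Y :: "int \<Rightarrow> 'a \<Rightarrow> real"
  assumes Y: "stationary_process M Y"
  shows "bounded_in_probability M Y"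
  unfolding bounded_in_probability_def
proof (intro allI impI)
  note [measurable] = stationary_process_measurable[OF Y]
  fix \<eta> :: real assume "0 < \<eta>"
  then have "eventually (\<lambda>N. measure M {\<omega> \<in> space M. real N < \<bar>Y 0 \<omega>\<bar>} < \<eta>) sequentially"
    by (intro order_tendstoD(2)[OF measure_abs_gt_nat_tendsto_0]) auto
  then obtain N :: nat where N: "measure M {\<omega> \<in> space M. real N < \<bar>Y 0 \<omega>\<bar>} < \<eta>"
    by (auto simp: eventually_sequentially)
  have same_tail: "measure M {\<omega> \<in> space M. real N < \<bar>Y k \<omega>\<bar>}
      = measure M {\<omega> \<in> space M. real N < \<bar>Y 0 \<omega>\<bar>}" for k
  proof -
    have "measure M {\<omega> \<in> space M. real N < \<bar>Y k \<omega>\<bar>} = measure (distr M borel (Y k)) {y. real N < \<bar>y\<bar>}"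
      by (subst measure_distr) (auto simp: vimage_def Int_def conj_commute)
    also have "\<dots> = measure (distr M borel (Y 0)) {y. real N < \<bar>y\<bar>}"
      by (simp only: stationary_process_distr_eq[OF prob_space_axioms Y, of k])
    also have "\<dots> = measure M {\<omega> \<in> space M. real N < \<bar>Y 0 \<omega>\<bar>}"
      by (subst measure_distr) (auto simp: vimage_def Int_def conj_commute)
    finally show ?thesis .
  qed
  show "\<exists>N. \<forall>k. measure M {\<omega> \<in> space M. N < \<bar>Y k \<omega>\<bar>} < \<eta>"
  proof (intro exI[of _ "real N"] allI)
    show "measure M {\<omega> \<in> space M. real N < \<bar>Y k \<omega>\<bar>} < \<eta>" for k
      using same_tail[of k] N by simp
  qed
qed

lemma bounded_in_probability_diff:
  assumes [measurable]: "\<And>i. X i \<in> borel_measurable M" "\<And>i. Y i \<in> borel_measurable M"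
    and X: "bounded_in_probability M X" and Y: "bounded_in_probability M Y"
  shows "bounded_in_probability M (\<lambda>i \<omega>. X i \<omega> - Y i \<omega>)"
  unfolding bounded_in_probability_def
proof (intro allI impI)
  fix \<eta> :: real assume "0 < \<eta>"
  then obtain N1 N2 where N1: "\<And>i. measure M {\<omega> \<in> space M. N1 < \<bar>X i \<omega>\<bar>} < \<eta> / 2"
    and N2: "\<And>i. measure M {\<omega> \<in> space M. N2 < \<bar>Y i \<omega>\<bar>} < \<eta> / 2"
    using X Y unfolding bounded_in_probability_def by (meson half_gt_zero)
  have "measure M {\<omega> \<in> space M. N1 + N2 < \<bar>X i \<omega> - Y i \<omega>\<bar>} < \<eta>" for i
  proof -
    have "measure M {\<omega> \<in> space M. N1 + N2 < \<bar>X i \<omega> - Y i \<omega>\<bar>}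
        \<le> measure M ({\<omega> \<in> space M. N1 < \<bar>X i \<omega>\<bar>} \<union> {\<omega> \<in> space M. N2 < \<bar>Y i \<omega>\<bar>})"
      by (intro finite_measure_mono) auto
    also have "\<dots> \<le> measure M {\<omega> \<in> space M. N1 < \<bar>X i \<omega>\<bar>} + measure M {\<omega> \<in> space M. N2 < \<bar>Y i \<omega>\<bar>}"
      by (intro measure_Un_le) auto
    also have "\<dots> < \<eta>"
      using N1[of i] N2[of i] by simp
    finally show ?thesis .
  qed
  then show "\<exists>N. \<forall>i. measure M {\<omega> \<in> space M. N < \<bar>X i \<omega> - Y i \<omega>\<bar>} < \<eta>"
    by blast
qed

text \<open>For every \<open>k\<close>, \<open>P(\<delta> < \<bar>D\<bar>) \<le> P(N < \<bar>b k\<bar>) + P(\<delta> / (\<bar>N\<bar> + 1) < \<bar>a k\<bar>)\<close>, and the last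
  term tends to \<open>0\<close>.\<close>
lemma AE_eq_0_if_dominated_by_vanishing_factor:
  fixes D :: "'a \<Rightarrow> real" and a b :: "nat \<Rightarrow> 'a \<Rightarrow> real"
  assumes [measurable]: "D \<in> borel_measurable M"
    "\<And>k. a k \<in> borel_measurable M" "\<And>k. b k \<in> borel_measurable M"
    and dominated: "AE \<omega> in M. \<forall>k. \<bar>D \<omega>\<bar> \<le> \<bar>a k \<omega>\<bar> * \<bar>b k \<omega>\<bar>"
    and vanishing: "AE \<omega> in M. (\<lambda>k. a k \<omega>) \<longlonglongrightarrow> 0"
    and bounded: "bounded_in_probability M b"
  shows "AE \<omega> in M. D \<omega> = 0"
proof -
  have null: "measure M {\<omega> \<in> space M. \<delta> < \<bar>D \<omega>\<bar>} \<le> \<eta>" if \<delta>: "0 < \<delta>" and \<eta>: "0 < \<eta>" for \<delta> \<eta>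
  proof -
    obtain N where N: "\<And>k. measure M {\<omega> \<in> space M. N < \<bar>b k \<omega>\<bar>} < \<eta>"
      using bounded \<eta> unfolding bounded_in_probability_def by blast
    define c where "c = \<delta> / (\<bar>N\<bar> + 1)"
    have c: "0 < c"
      using \<delta> by (simp add: c_def add_pos_nonneg)
    have "measure M {\<omega> \<in> space M. \<delta> < \<bar>D \<omega>\<bar>} \<le> \<eta> + measure M {\<omega> \<in> space M. c < \<bar>a k \<omega>\<bar>}" for k
    proof -
      have "AE \<omega> in M. \<omega> \<in> {\<omega> \<in> space M. \<delta> < \<bar>D \<omega>\<bar>} \<longrightarrow>
          \<omega> \<in> {\<omega> \<in> space M. N < \<bar>b k \<omega>\<bar>} \<union> {\<omega> \<in> space M. c < \<bar>a k \<omega>\<bar>}"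
        using dominated
      proof eventually_elim
        case (elim \<omega>)
        show ?case
        proof (intro impI)
          assume "\<omega> \<in> {\<omega> \<in> space M. \<delta> < \<bar>D \<omega>\<bar>}"
          then have \<omega>: "\<omega> \<in> space M" "\<delta> < \<bar>a k \<omega>\<bar> * \<bar>b k \<omega>\<bar>"
            using elim[rule_format, of k] by auto
          have "\<not> (\<bar>b k \<omega>\<bar> \<le> N \<and> \<bar>a k \<omega>\<bar> \<le> c)"
          proof
            assume "\<bar>b k \<omega>\<bar> \<le> N \<and> \<bar>a k \<omega>\<bar> \<le> c"
            then have "\<bar>a k \<omega>\<bar> * \<bar>b k \<omega>\<bar> \<le> c * \<bar>N\<bar>"
              by (intro mult_mono) auto
            also have "\<dots> < \<delta>"
              using \<delta> by (simp add: c_def field_simps)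
            finally show False
              using \<omega>(2) by simp
          qed
          then show "\<omega> \<in> {\<omega> \<in> space M. N < \<bar>b k \<omega>\<bar>} \<union> {\<omega> \<in> space M. c < \<bar>a k \<omega>\<bar>}"
            using \<omega>(1) by auto
        qed
      qed
      then have "measure M {\<omega> \<in> space M. \<delta> < \<bar>D \<omega>\<bar>}
          \<le> measure M ({\<omega> \<in> space M. N < \<bar>b k \<omega>\<bar>} \<union> {\<omega> \<in> space M. c < \<bar>a k \<omega>\<bar>})"
        by (intro finite_measure_mono_AE) auto
      also have "\<dots> \<le> measure M {\<omega> \<in> space M. N < \<bar>b k \<omega>\<bar>} + measure M {\<omega> \<in> space M. c < \<bar>a k \<omega>\<bar>}"
        by (intro measure_Un_le) auto
      finally show ?thesis
        using N[of k] by simp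
    qed
    moreover have "(\<lambda>k. \<eta> + measure M {\<omega> \<in> space M. c < \<bar>a k \<omega>\<bar>}) \<longlonglongrightarrow> \<eta> + 0"
      by (intro tendsto_add tendsto_const measure_abs_gt_tendsto_0 vanishing c) auto
    ultimately show ?thesis
      by (intro LIMSEQ_le_const[where X = "\<lambda>k. \<eta> + measure M {\<omega> \<in> space M. c < \<bar>a k \<omega>\<bar>}"]) auto
  qed
  have "AE \<omega> in M. \<not> inverse (real (Suc q)) < \<bar>D \<omega>\<bar>" for q
  proof -
    let ?S = "{\<omega> \<in> space M. inverse (real (Suc q)) < \<bar>D \<omega>\<bar>}"
    have "measure M ?S \<le> 0"
      by (rule field_le_epsilon) (use null[of "inverse (real (Suc q))"] in simp)
    then have "measure M ?S = 0"
      using measure_nonneg[of M ?S] by linarith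
    then have "AE \<omega> in M. \<omega> \<notin> ?S"
      using prob_eq_0[of ?S] by simp
    then show ?thesis
      using AE_space by eventually_elim auto
  qed
  then have "AE \<omega> in M. \<forall>q. \<not> inverse (real (Suc q)) < \<bar>D \<omega>\<bar>"
    by (simp add: AE_all_countable)
  then show ?thesis
  proof eventually_elim
    case (elim \<omega>)
    show ?case
    proof (rule ccontr)
      assume "D \<omega> \<noteq> 0"
      then obtain q where "inverse (real (Suc q)) < \<bar>D \<omega>\<bar>"
        using reals_Archimedean[of "\<bar>D \<omega>\<bar>"] by auto
      with elim show False
        by blast
    qed
  qed
qed

end

lemma exp_affine_eq_geometric: "exp (C - \<epsilon> * real m) = exp C * exp (- \<epsilon>) ^ m"
  by (simp add: exp_diff exp_minus exp_of_nat_mult[symmetric] field_simps mult.commute)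

locale abs_recurrence = stationary_ergodic_process M "\<lambda>n \<omega>. (A n \<omega>, B n \<omega>)"
  for M :: "'a measure" and A B :: "int \<Rightarrow> 'a \<Rightarrow> real" +
  assumes log_A: "\<And>n. (\<integral>\<^sup>+\<omega>. log_plus_abs (A n \<omega>) \<partial>M) < (\<integral>\<^sup>+\<omega>. log_minus_abs (A n \<omega>) \<partial>M)"
begin

lemma measurable_A [measurable]: "A n \<in> borel_measurable M"
  and measurable_B [measurable]: "B n \<in> borel_measurable M"
  using measurable_compose[OF measurable_Z borel_measurable_fst]
    measurable_compose[OF measurable_Z borel_measurable_snd] by simp_all

lemma prod_abs_A_exponential_decay:
  "\<exists>\<epsilon>>0. AE \<omega> in M. \<exists>C. \<forall>m. (\<Prod>j<m. \<bar>A (n - int j) \<omega>\<bar>) \<le> exp (C - \<epsilon> * real m)"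
  using prod_abs_past_exponential_decay[OF borel_measurable_fst, of n] log_A[of n] by simp

lemma prod_abs_A_tendsto_0: "AE \<omega> in M. (\<lambda>k. \<Prod>j<k. \<bar>A (n - int j) \<omega>\<bar>) \<longlonglongrightarrow> 0"
proof -
  obtain \<epsilon> where \<epsilon>: "0 < \<epsilon>"
    and decay: "AE \<omega> in M. \<exists>C. \<forall>m. (\<Prod>j<m. \<bar>A (n - int j) \<omega>\<bar>) \<le> exp (C - \<epsilon> * real m)"
    using prod_abs_A_exponential_decay by blast
  from decay show ?thesis
  proof eventually_elim
    case (elim \<omega>)
    then obtain C where C: "\<And>m. (\<Prod>j<m. \<bar>A (n - int j) \<omega>\<bar>) \<le> exp C * exp (- \<epsilon>) ^ m"
      by (auto simp: exp_affine_eq_geometric)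
    have "(\<lambda>m. exp C * exp (- \<epsilon>) ^ m) \<longlonglongrightarrow> exp C * 0"
      using \<epsilon> by (intro tendsto_mult tendsto_const LIMSEQ_power_zero) auto
    then have geometric: "(\<lambda>m. exp C * exp (- \<epsilon>) ^ m) \<longlonglongrightarrow> 0"
      by simp
    show ?case
    proof (rule tendsto_sandwich[OF _ _ tendsto_const geometric])
      show "\<forall>\<^sub>F m in sequentially. 0 \<le> (\<Prod>j<m. \<bar>A (n - int j) \<omega>\<bar>)"
        by (intro always_eventually allI prod_nonneg) simp
      show "\<forall>\<^sub>F m in sequentially. (\<Prod>j<m. \<bar>A (n - int j) \<omega>\<bar>) \<le> exp C * exp (- \<epsilon>) ^ m"
        by (intro always_eventually allI C)
    qed
  qed
qed

text \<open>Two stationary solutions differ at time \<open>n\<close> by at most the contraction factor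
  \<open>\<Prod>j<k. \<bar>A (n - j)\<bar>\<close>, which tends to \<open>0\<close>, times their difference at time \<open>n - k\<close>,
  which is bounded in probability by stationarity.\<close>
lemma stationary_solutions_AE_eq:
  assumes Y: "stationary_solution M A B Y" and W: "stationary_solution M A B W"
  shows "AE \<omega> in M. \<forall>n. Y n \<omega> = W n \<omega>"
proof -
  have Y_stat: "stationary_process M Y" and W_stat: "stationary_process M W"
    using Y W by (simp_all add: stationary_solution_def)
  note [measurable] = stationary_process_measurable[OF Y_stat] stationary_process_measurable[OF W_stat]
  have recurrence: "AE \<omega> in M. (\<forall>i. Y (i + 1) \<omega> = A (i + 1) \<omega> * \<bar>Y i \<omega>\<bar> + B (i + 1) \<omega>)
      \<and> (\<forall>i. W (i + 1) \<omega> = A (i + 1) \<omega> * \<bar>W i \<omega>\<bar> + B (i + 1) \<omega>)"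
    using Y W by (simp add: stationary_solution_def AE_all_countable)
  have "bounded_in_probability M (\<lambda>i \<omega>. Y i \<omega> - W i \<omega>)"
    by (intro bounded_in_probability_diff stationary_process_bounded_in_probability Y_stat W_stat) auto
  then have bounded: "bounded_in_probability M (\<lambda>k \<omega>. Y (n - int k) \<omega> - W (n - int k) \<omega>)" for n
    by (rule bounded_in_probability_reindex)
  have "AE \<omega> in M. Y n \<omega> - W n \<omega> = 0" for n
  proof (rule AE_eq_0_if_dominated_by_vanishing_factor[OF _ _ _ _ prod_abs_A_tendsto_0 bounded])
    show "AE \<omega> in M. \<forall>k. \<bar>Y n \<omega> - W n \<omega>\<bar>
        \<le> \<bar>\<Prod>j<k. \<bar>A (n - int j) \<omega>\<bar>\<bar> * \<bar>Y (n - int k) \<omega> - W (n - int k) \<omega>\<bar>"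
      using recurrence
    proof eventually_elim
      case (elim \<omega>)
      have "\<bar>Y n \<omega> - W n \<omega>\<bar> \<le> (\<Prod>j<k. \<bar>A (n - int j) \<omega>\<bar>) * \<bar>Y (n - int k) \<omega> - W (n - int k) \<omega>\<bar>" for k
        by (rule recurrence_solutions_diff_le[where y = "\<lambda>i. Y i \<omega>" and w = "\<lambda>i. W i \<omega>"
              and a = "\<lambda>i. A i \<omega>" and b = "\<lambda>i. B i \<omega>"]) (use elim in simp_all)
      then show ?case
        by (simp add: abs_prod)
    qed
  qed auto
  then show ?thesis
    by (simp add: AE_all_countable)
qed

context
  assumes log_B: "\<And>n. (\<integral>\<^sup>+\<omega>. log_plus_abs (B n \<omega>) \<partial>M) < \<infinity>"
begin

lemma backward_iterate_AE_convergent: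
  "AE \<omega> in M. convergent (\<lambda>m. backward_iterate m (\<lambda>i. (A i \<omega>, B i \<omega>)) n)"
proof -
  obtain \<epsilon> where \<epsilon>: "0 < \<epsilon>"
    and decay: "AE \<omega> in M. \<exists>C. \<forall>m. (\<Prod>j<m. \<bar>A (n - int j) \<omega>\<bar>) \<le> exp (C - \<epsilon> * real m)"
    using prod_abs_A_exponential_decay by blast
  have growth: "AE \<omega> in M. \<exists>C. \<forall>m. \<bar>B (n - int m) \<omega>\<bar> \<le> exp (C + \<epsilon> / 2 * real m)"
    using abs_past_subexponential_growth[OF borel_measurable_snd, of "\<epsilon> / 2" n] log_B \<epsilon> by simp
  from decay growth show ?thesis
  proof eventually_elim
    case (elim \<omega>)
    then obtain C1 C2 where C1: "\<And>m. (\<Prod>j<m. \<bar>A (n - int j) \<omega>\<bar>) \<le> exp (C1 - \<epsilon> * real m)"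
      and C2: "\<And>m. \<bar>B (n - int m) \<omega>\<bar> \<le> exp (C2 + \<epsilon> / 2 * real m)"
      by blast
    have bound: "(\<Prod>j<m. \<bar>A (n - int j) \<omega>\<bar>) * \<bar>B (n - int m) \<omega>\<bar>
        \<le> exp (C1 + C2) * exp (- (\<epsilon> / 2)) ^ m" for m
    proof -
      have "(\<Prod>j<m. \<bar>A (n - int j) \<omega>\<bar>) * \<bar>B (n - int m) \<omega>\<bar>
          \<le> exp (C1 - \<epsilon> * real m) * exp (C2 + \<epsilon> / 2 * real m)"
        by (intro mult_mono C1 C2) auto
      also have "\<dots> = exp (C1 + C2 - \<epsilon> / 2 * real m)"
        by (simp add: exp_add[symmetric] algebra_simps)
      finally show ?thesis
        by (simp only: exp_affine_eq_geometric)
    qed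
    have "summable (\<lambda>m. exp (C1 + C2) * exp (- (\<epsilon> / 2)) ^ m)"
      using \<epsilon> by (intro summable_mult summable_geometric) simp
    then have "summable (\<lambda>m. (\<Prod>j<m. \<bar>A (n - int j) \<omega>\<bar>) * \<bar>B (n - int m) \<omega>\<bar>)"
      by (rule summable_comparison_test') (use bound in \<open>simp add: abs_mult abs_prod\<close>)
    then show ?case
      by (intro backward_iterate_convergent) simp
  qed
qed

lemma stationary_solution_backward_limit:
  "stationary_solution M A B (\<lambda>n \<omega>. backward_limit n (\<lambda>i. (A i \<omega>, B i \<omega>)))"
  unfolding stationary_solution_def
proof
  show "stationary_process M (\<lambda>n \<omega>. backward_limit n (\<lambda>i. (A i \<omega>, B i \<omega>)))"
    using stationary_process_path_functional[OF prob_space_axioms stationary, of backward_limit]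
    by (simp add: backward_limit_shift)
  show "\<forall>n. AE \<omega> in M. backward_limit (n + 1) (\<lambda>i. (A i \<omega>, B i \<omega>))
      = A (n + 1) \<omega> * \<bar>backward_limit n (\<lambda>i. (A i \<omega>, B i \<omega>))\<bar> + B (n + 1) \<omega>"
  proof
    fix n
    show "AE \<omega> in M. backward_limit (n + 1) (\<lambda>i. (A i \<omega>, B i \<omega>))
        = A (n + 1) \<omega> * \<bar>backward_limit n (\<lambda>i. (A i \<omega>, B i \<omega>))\<bar> + B (n + 1) \<omega>"
      using backward_iterate_AE_convergent[of n]
      by eventually_elim (simp add: backward_limit_recurrence)
  qed
qed

end

end

theorem theorem2:
  fixes M :: "'a measure" and A B :: "int \<Rightarrow> 'a \<Rightarrow> real"
  assumes "prob_space M"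
    and "stationary_process M (\<lambda>n \<omega>. (A n \<omega>, B n \<omega>))"
    and "ergodic_process M (\<lambda>n \<omega>. (A n \<omega>, B n \<omega>))"
    and "\<And>n. (\<integral>\<^sup>+ \<omega>. log_plus_abs (A n \<omega>) \<partial>M) < (\<integral>\<^sup>+ \<omega>. log_minus_abs (A n \<omega>) \<partial>M)"
    and "\<And>n. (\<integral>\<^sup>+ \<omega>. log_plus_abs (B n \<omega>) \<partial>M) < \<infinity>"
  shows "\<exists>X. stationary_solution M A B X \<and>
           (\<forall>Y. stationary_solution M A B Y \<longrightarrow> (AE \<omega> in M. \<forall>n. Y n \<omega> = X n \<omega>))"
proof -
  interpret abs_recurrence M A B
    using assms by (intro abs_recurrence.intro abs_recurrence_axioms.intro
        stationary_ergodic_process.intro stationary_ergodic_process_axioms.intro)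
  show ?thesis
    using stationary_solution_backward_limit[OF assms(5)] stationary_solutions_AE_eq by blast
qed

end
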